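(* The chain theory of the binary tree with equal-level relation and MSO on tree levels is undecidable.
   Context: The binary tree with equal-level relation is the structure $(\{0,1\}^*,S_0,S_1,\preceq,E)$ (equivalently the weak tree iteration of $(\{0,1\},\{0\},\{1\})$ with equal-level relation), where $S_0=\{(u,u0)\}$, $S_1=\{(u,u1)\}$, $u\preceq v$ iff $u$ is a prefix of $v$, and $E(u,v)$ iff $|u|=|v|$. A path is a maximal $\preceq$-linearly ordered subset of $\{0,1\}^*$, and a chain is a subset of a path. Chain logic is monadic second-order logic in which set quantifiers range only over chains. "With MSO on tree levels" means that in addition monadic second-order quantification is allowed over arbitrary subsets of a single tree level, i.e. over subsets of $\{w\in\{0,1\}^*\mid |w|=|u|\}$ for a given node $u$ (together with first-order quantification over such a level). The chain theory with MSO on tree levels is the set of sentences of this logic true in the binary tree with $E$. *)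

theory Defs
  imports Main "HOL-Library.Sublist" "HOL-Library.Nat_Bijection"
begin

text \<open>Nodes of the binary tree are words over {0,1}, represented as bool lists
  (False = 0, True = 1).\<close>

type_synonym node = "bool list"

definition S0 :: "node \<Rightarrow> node \<Rightarrow> bool" where
  "S0 u v \<longleftrightarrow> v = u @ [False]"

definition S1 :: "node \<Rightarrow> node \<Rightarrow> bool" where
  "S1 u v \<longleftrightarrow> v = u @ [True]"

definition tree_le :: "node \<Rightarrow> node \<Rightarrow> bool" where
  "tree_le u v \<longleftrightarrow> prefix u v"

definition eq_level :: "node \<Rightarrow> node \<Rightarrow> bool" where
  "eq_level u v \<longleftrightarrow> length u = length v"

definition lin_ordered :: "node set \<Rightarrow> bool" where
  "lin_ordered P \<longleftrightarrow> (\<forall>u\<in>P. \<forall>v\<in>P. tree_le u v \<or> tree_le v u)"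

definition is_path :: "node set \<Rightarrow> bool" where
  "is_path P \<longleftrightarrow> lin_ordered P \<and> (\<forall>Q. lin_ordered Q \<and> P \<subseteq> Q \<longrightarrow> Q = P)"

definition is_chain :: "node set \<Rightarrow> bool" where
  "is_chain C \<longleftrightarrow> (\<exists>P. is_path P \<and> C \<subseteq> P)"

definition level :: "node \<Rightarrow> node set" where
  "level u = {w. length w = length u}"

text \<open>ExChain quantifies over chains; ExLevel X x quantifies X over arbitrary subsets of
  the tree level of the node x.  (First-order quantification restricted to a level is
  expressible with ExN and EqLevel.)\<close>

datatype form =
    FS0 nat nat
  | FS1 nat nat
  | FLe nat nat
  | FEqLevel nat nat
  | FEq nat nat
  | FMem nat nat
  | FNeg form
  | FOr form form
  | FExN nat form
  | FExChain nat form
  | FExLevel nat nat form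

fun sat :: "(nat \<Rightarrow> node) \<Rightarrow> (nat \<Rightarrow> node set) \<Rightarrow> form \<Rightarrow> bool" where
  "sat \<nu> \<sigma> (FS0 x y) = S0 (\<nu> x) (\<nu> y)"
| "sat \<nu> \<sigma> (FS1 x y) = S1 (\<nu> x) (\<nu> y)"
| "sat \<nu> \<sigma> (FLe x y) = tree_le (\<nu> x) (\<nu> y)"
| "sat \<nu> \<sigma> (FEqLevel x y) = eq_level (\<nu> x) (\<nu> y)"
| "sat \<nu> \<sigma> (FEq x y) = (\<nu> x = \<nu> y)"
| "sat \<nu> \<sigma> (FMem x X) = (\<nu> x \<in> \<sigma> X)"
| "sat \<nu> \<sigma> (FNeg \<phi>) = (\<not> sat \<nu> \<sigma> \<phi>)"
| "sat \<nu> \<sigma> (FOr \<phi> \<psi>) = (sat \<nu> \<sigma> \<phi> \<or> sat \<nu> \<sigma> \<psi>)"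
| "sat \<nu> \<sigma> (FExN x \<phi>) = (\<exists>u. sat (\<nu>(x := u)) \<sigma> \<phi>)"
| "sat \<nu> \<sigma> (FExChain X \<phi>) = (\<exists>C. is_chain C \<and> sat \<nu> (\<sigma>(X := C)) \<phi>)"
| "sat \<nu> \<sigma> (FExLevel X x \<phi>) = (\<exists>S. S \<subseteq> level (\<nu> x) \<and> sat \<nu> (\<sigma>(X := S)) \<phi>)"

fun fvN :: "form \<Rightarrow> nat set" where
  "fvN (FS0 x y) = {x, y}"
| "fvN (FS1 x y) = {x, y}"
| "fvN (FLe x y) = {x, y}"
| "fvN (FEqLevel x y) = {x, y}"
| "fvN (FEq x y) = {x, y}"
| "fvN (FMem x X) = {x}"
| "fvN (FNeg \<phi>) = fvN \<phi>"
| "fvN (FOr \<phi> \<psi>) = fvN \<phi> \<union> fvN \<psi>"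
| "fvN (FExN x \<phi>) = fvN \<phi> - {x}"
| "fvN (FExChain X \<phi>) = fvN \<phi>"
| "fvN (FExLevel X x \<phi>) = insert x (fvN \<phi>)"

fun fvS :: "form \<Rightarrow> nat set" where
  "fvS (FMem x X) = {X}"
| "fvS (FNeg \<phi>) = fvS \<phi>"
| "fvS (FOr \<phi> \<psi>) = fvS \<phi> \<union> fvS \<psi>"
| "fvS (FExN x \<phi>) = fvS \<phi>"
| "fvS (FExChain X \<phi>) = fvS \<phi> - {X}"
| "fvS (FExLevel X x \<phi>) = fvS \<phi> - {X}"
| "fvS _ = {}"

definition sentence :: "form \<Rightarrow> bool" where
  "sentence \<phi> \<longleftrightarrow> fvN \<phi> = {} \<and> fvS \<phi> = {}"

definition chain_theory :: "form set" where
  "chain_theory = {\<phi>. sentence \<phi> \<and> (\<forall>\<nu> \<sigma>. sat \<nu> \<sigma> \<phi>)}"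

fun code :: "form \<Rightarrow> nat" where
  "code (FS0 x y) = prod_encode (0, prod_encode (x, y))"
| "code (FS1 x y) = prod_encode (1, prod_encode (x, y))"
| "code (FLe x y) = prod_encode (2, prod_encode (x, y))"
| "code (FEqLevel x y) = prod_encode (3, prod_encode (x, y))"
| "code (FEq x y) = prod_encode (4, prod_encode (x, y))"
| "code (FMem x X) = prod_encode (5, prod_encode (x, X))"
| "code (FNeg \<phi>) = prod_encode (6, code \<phi>)"
| "code (FOr \<phi> \<psi>) = prod_encode (7, prod_encode (code \<phi>, code \<psi>))"
| "code (FExN x \<phi>) = prod_encode (8, prod_encode (x, code \<phi>))"
| "code (FExChain X \<phi>) = prod_encode (9, prod_encode (X, code \<phi>))"
| "code (FExLevel X x \<phi>) = prod_encode (10, prod_encode (X, prod_encode (x, code \<phi>)))"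

datatype recf =
    RZ
  | RS
  | RProj nat
  | RComp recf "recf list"
  | RPrim recf recf
  | RMn recf

inductive reval :: "recf \<Rightarrow> nat list \<Rightarrow> nat \<Rightarrow> bool" where
  zero: "reval RZ xs 0"
| succ: "reval RS (x # xs) (Suc x)"
| proj: "i < length xs \<Longrightarrow> reval (RProj i) xs (xs ! i)"
| comp: "list_all2 (\<lambda>g y. reval g xs y) gs ys \<Longrightarrow> reval f ys z \<Longrightarrow> reval (RComp f gs) xs z"
| prim0: "reval f xs z \<Longrightarrow> reval (RPrim f g) (0 # xs) z"
| primS: "reval (RPrim f g) (n # xs) y \<Longrightarrow> reval g (y # n # xs) z
          \<Longrightarrow> reval (RPrim f g) (Suc n # xs) z"
| mn: "reval f (n # xs) 0 \<Longrightarrow> (\<forall>m<n. \<exists>k. k \<noteq> 0 \<and> reval f (m # xs) k)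
          \<Longrightarrow> reval (RMn f) xs n"

definition decidable_set :: "nat set \<Rightarrow> bool" where
  "decidable_set A \<longleftrightarrow> (\<exists>f. \<forall>n. reval f [n] (if n \<in> A then 1 else 0))"

end

theory Submission
  imports Defs
begin

text \<open>Natural numbers are represented by tree levels, i.e. by lengths of nodes.  The graph of
  every \<open>\<mu>\<close>-recursive function is then definable: composition and minimisation only need
  first-order quantification over levels, and a primitive recursion up to \<open>N\<close> is witnessed
  by two sets of nodes on one common level whose elements store the pairs \<open>(i, value at i)\<close>
  of the course of values as the positions of their two 1-bits; this is where MSO on a tree
  level is used.  Since the coding of formulas is
  recursive, the diagonal argument applies: if \<open>F\<close> decided the theory, the sentence saying
  "\<open>F\<close> rejects my code" would be true exactly when \<open>F\<close> rejects it.\<close>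

section \<open>Recursive functions and Goedel numbering\<close>

lemma inj_code: "inj code"
proof (rule injI)
  fix \<phi> \<psi> :: form
  show "code \<phi> = code \<psi> \<Longrightarrow> \<phi> = \<psi>"
    by (induction \<phi> arbitrary: \<psi>)
      (case_tac \<psi>; simp only: code.simps prod_encode_eq prod.inject form.inject; simp; blast)+
qed

inductive_cases reval_RZE: "reval RZ xs y"
inductive_cases reval_RSE: "reval RS xs y"
inductive_cases reval_RProjE: "reval (RProj i) xs y"
inductive_cases reval_RCompE: "reval (RComp f gs) xs y"
inductive_cases reval_RPrimE: "reval (RPrim f g) xs y"
inductive_cases reval_RMnE: "reval (RMn f) xs y"

lemma list_all2_right_unique:
  assumes "list_all2 (\<lambda>g y. P g y \<and> (\<forall>y'. P g y' \<longrightarrow> y = y')) gs ys" and "list_all2 P gs ys'"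
  shows "ys = ys'"
  using assms
proof (induction gs arbitrary: ys ys')
  case (Cons g gs)
  then show ?case by (cases ys; cases ys'; simp)
qed simp

lemma reval_unique: "reval f xs y \<Longrightarrow> reval f xs y' \<Longrightarrow> y = y'"
proof (induction arbitrary: y' rule: reval.induct)
  case (comp xs gs ys f z)
  from comp.prems obtain ys' where ys': "list_all2 (\<lambda>g y. reval g xs y) gs ys'" "reval f ys' y'"
    by (rule reval_RCompE)
  have "ys = ys'" using list_all2_right_unique[OF comp(1) ys'(1)] .
  then show ?case using comp.IH ys'(2) by blast
next
  case (prim0 f xs z)
  from prim0.prems show ?case by (rule reval_RPrimE) (use prim0.IH in auto)
next
  case (primS f g n xs y z)
  from primS.prems show ?case by (rule reval_RPrimE) (use primS.IH in auto)
next
  case (mn f n xs)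
  from mn.prems have y': "reval f (y' # xs) 0" "\<forall>m<y'. \<exists>k. k \<noteq> 0 \<and> reval f (m # xs) k"
    by (rule reval_RMnE, auto)+
  show ?case
  proof (rule linorder_cases[of n y'])
    assume "n < y'"
    then show ?thesis using y'(2) mn.IH(1) by blast
  next
    assume "y' < n"
    then show ?thesis using y'(1) mn.IH(2) by blast
  qed
qed (auto elim: reval_RZE reval_RSE reval_RProjE)

lemma reval_RComp1: "reval g xs a \<Longrightarrow> reval f [a] z \<Longrightarrow> reval (RComp f [g]) xs z"
  by (rule reval.comp[of _ _ "[a]"]) auto

lemma reval_RComp2:
  "reval g1 xs a \<Longrightarrow> reval g2 xs b \<Longrightarrow> reval f [a, b] z \<Longrightarrow> reval (RComp f [g1, g2]) xs z"
  by (rule reval.comp[of _ _ "[a, b]"]) auto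

lemma reval_RProj0: "reval (RProj 0) (x # xs) x"
  using reval.proj[of 0 "x # xs"] by simp

lemma reval_RProj1: "reval (RProj (Suc 0)) (x # y # xs) y"
  using reval.proj[of 1 "x # y # xs"] by simp

primrec rconst :: "nat \<Rightarrow> recf" where
  "rconst 0 = RZ"
| "rconst (Suc k) = RComp RS [rconst k]"

lemma reval_rconst: "reval (rconst k) xs k"
  by (induction k) (auto intro: reval.intros reval_RComp1)

definition radd :: recf where
  "radd = RPrim (RProj 0) (RComp RS [RProj 0])"

lemma reval_radd: "reval radd [a, b] (a + b)"
  unfolding radd_def
proof (induction a)
  case 0
  show ?case using reval.prim0[OF reval_RProj0[of b "[]"]] by simp
next
  case (Suc a)
  have "reval (RComp RS [RProj 0]) [a + b, a, b] (Suc (a + b))"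
    by (rule reval_RComp1[OF reval_RProj0]) (rule reval.succ)
  then show ?case using reval.primS[OF Suc] by simp
qed

definition rtriangle :: recf where
  "rtriangle = RPrim RZ (RComp radd [RProj 0, RComp RS [RProj 1]])"

lemma reval_rtriangle: "reval rtriangle [n] (triangle n)"
  unfolding rtriangle_def
proof (induction n)
  case 0
  show ?case using reval.prim0[OF reval.zero[of "[]"]] by simp
next
  case (Suc n)
  have "reval (RComp RS [RProj 1]) [triangle n, n] (Suc n)"
    using reval_RComp1[OF reval_RProj1 reval.succ] by simp
  then have "reval (RComp radd [RProj 0, RComp RS [RProj 1]]) [triangle n, n] (triangle n + Suc n)"
    by (rule reval_RComp2[OF reval_RProj0 _ reval_radd])
  then show ?case using reval.primS[OF Suc] by simp
qed

definition rprod_encode :: recf where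
  "rprod_encode = RComp radd [RComp rtriangle [RComp radd [RProj 0, RProj 1]], RProj 0]"

lemma reval_rprod_encode: "reval rprod_encode [a, b] (prod_encode (a, b))"
  unfolding rprod_encode_def prod_encode_def
  by (auto intro!: reval_RComp2[OF _ _ reval_radd] reval_RComp1[OF _ reval_rtriangle]
      reval_RComp2[OF reval_RProj0 _ reval_radd] reval_RProj0 reval_RProj1)

definition rtag :: "nat \<Rightarrow> recf \<Rightarrow> recf" where
  "rtag k F = RComp rprod_encode [rconst k, F]"

lemma reval_rtag: "reval F xs v \<Longrightarrow> reval (rtag k F) xs (prod_encode (k, v))"
  unfolding rtag_def by (rule reval_RComp2[OF reval_rconst _ reval_rprod_encode])

text \<open>A formula can serve as a template whose atoms \<open>FMem 0 0\<close> and \<open>FMem 0 1\<close> are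
  placeholders for subformulas with codes \<open>c0\<close> and \<open>c1\<close>; the code of the filled-in
  template is a recursive function of \<open>c0\<close> and \<open>c1\<close>.\<close>

fun template_code :: "nat \<Rightarrow> nat \<Rightarrow> form \<Rightarrow> nat" where
  "template_code c0 c1 (FMem x X) =
     (if x = 0 \<and> X = 0 then c0 else if x = 0 \<and> X = 1 then c1 else code (FMem x X))"
| "template_code c0 c1 (FNeg \<phi>) = prod_encode (6, template_code c0 c1 \<phi>)"
| "template_code c0 c1 (FOr \<phi> \<psi>) =
     prod_encode (7, prod_encode (template_code c0 c1 \<phi>, template_code c0 c1 \<psi>))"
| "template_code c0 c1 (FExN x \<phi>) = prod_encode (8, prod_encode (x, template_code c0 c1 \<phi>))"
| "template_code c0 c1 (FExChain X \<phi>) = prod_encode (9, prod_encode (X, template_code c0 c1 \<phi>))"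
| "template_code c0 c1 (FExLevel X x \<phi>) =
     prod_encode (10, prod_encode (X, prod_encode (x, template_code c0 c1 \<phi>)))"
| "template_code c0 c1 \<phi> = code \<phi>"

fun rtemplate :: "form \<Rightarrow> recf" where
  "rtemplate (FMem x X) =
     (if x = 0 \<and> X = 0 then RProj 0 else if x = 0 \<and> X = 1 then RProj 1 else rconst (code (FMem x X)))"
| "rtemplate (FNeg \<phi>) = rtag 6 (rtemplate \<phi>)"
| "rtemplate (FOr \<phi> \<psi>) = rtag 7 (RComp rprod_encode [rtemplate \<phi>, rtemplate \<psi>])"
| "rtemplate (FExN x \<phi>) = rtag 8 (rtag x (rtemplate \<phi>))"
| "rtemplate (FExChain X \<phi>) = rtag 9 (rtag X (rtemplate \<phi>))"
| "rtemplate (FExLevel X x \<phi>) = rtag 10 (rtag X (rtag x (rtemplate \<phi>)))"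
| "rtemplate \<phi> = rconst (code \<phi>)"

lemma reval_rtemplate: "reval (rtemplate \<phi>) [c0, c1] (template_code c0 c1 \<phi>)"
proof (induction \<phi>)
  case (FOr \<phi>1 \<phi>2)
  then show ?case by (auto intro!: reval_rtag reval_RComp2[OF _ _ reval_rprod_encode])
qed (auto intro!: reval_rtag reval_rconst reval_RProj0 reval_RProj1)

abbreviation FAnd :: "form \<Rightarrow> form \<Rightarrow> form" where
  "FAnd \<phi> \<psi> \<equiv> FNeg (FOr (FNeg \<phi>) (FNeg \<psi>))"

abbreviation FImp :: "form \<Rightarrow> form \<Rightarrow> form" where
  "FImp \<phi> \<psi> \<equiv> FOr (FNeg \<phi>) \<psi>"

abbreviation FAllN :: "nat \<Rightarrow> form \<Rightarrow> form" where
  "FAllN x \<phi> \<equiv> FNeg (FExN x (FNeg \<phi>))"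

abbreviation FFalse :: form where
  "FFalse \<equiv> FExN 0 (FNeg (FEq 0 0))"

lemma ex_node_of_length: "\<exists>u::node. length u = n"
  by (rule exI[of _ "replicate n False"]) simp

lemma length_eq_Suc_iff_child: "length v = Suc n \<longleftrightarrow> (\<exists>u. (v = u @ [False] \<or> v = u @ [True]) \<and> length u = n)"
proof
  assume "length v = Suc n"
  then obtain u b where "v = u @ [b]" "length u = n"
    by (metis length_Suc_conv_rev)
  then show "\<exists>u. (v = u @ [False] \<or> v = u @ [True]) \<and> length u = n"
    by (cases b) auto
qed auto

primrec FLevel :: "nat \<Rightarrow> form" where
  "FLevel 0 = FAllN 1 (FLe 0 1)"
| "FLevel (Suc n) = FExN 1 (FAnd (FOr (FS0 1 0) (FS1 1 0)) (FExN 0 (FAnd (FEq 0 1) (FLevel n))))"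

lemma sat_FLevel: "sat \<nu> \<sigma> (FLevel n) \<longleftrightarrow> length (\<nu> 0) = n"
proof (induction n arbitrary: \<nu>)
  case 0
  have "(\<forall>u. prefix (\<nu> 0) u) \<longleftrightarrow> \<nu> 0 = []"
    by (metis Nil_prefix prefix_Nil)
  then show ?case by (simp add: tree_le_def)
next
  case (Suc n)
  then show ?case by (simp add: S0_def S1_def length_eq_Suc_iff_child)
qed

definition FLevel_step :: form where
  "FLevel_step = FExN 1 (FAnd (FOr (FS0 1 0) (FS1 1 0)) (FExN 0 (FAnd (FEq 0 1) (FMem 0 0))))"

definition rcode_FLevel :: recf where
  "rcode_FLevel = RPrim (rconst (code (FLevel 0))) (rtemplate FLevel_step)"

lemma reval_rcode_FLevel: "reval rcode_FLevel [n] (code (FLevel n))"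
  unfolding rcode_FLevel_def
proof (induction n)
  case 0
  show ?case using reval.prim0[OF reval_rconst] by simp
next
  case (Suc n)
  have "reval (rtemplate FLevel_step) [code (FLevel n), n] (code (FLevel (Suc n)))"
    using reval_rtemplate[of FLevel_step "code (FLevel n)" n] by (simp add: FLevel_step_def)
  then show ?case using reval.primS[OF Suc] by simp
qed

definition diag :: "form \<Rightarrow> form" where
  "diag \<psi> = FExN 0 (FAnd (FLevel (code \<psi>)) \<psi>)"

definition diag_template :: form where
  "diag_template = FExN 0 (FAnd (FMem 0 0) (FMem 0 1))"

definition rcode_diag :: recf where
  "rcode_diag = RComp (rtemplate diag_template) [RComp rcode_FLevel [RProj 0], RProj 0]"

lemma reval_rcode_diag: "reval rcode_diag [code \<psi>] (code (diag \<psi>))"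
proof -
  have "reval rcode_diag [code \<psi>] (template_code (code (FLevel (code \<psi>))) (code \<psi>) diag_template)"
    unfolding rcode_diag_def
    by (rule reval_RComp2[OF reval_RComp1[OF reval_RProj0 reval_rcode_FLevel] reval_RProj0
          reval_rtemplate])
  then show ?thesis by (simp add: diag_template_def diag_def)
qed

text \<open>The last argument \<open>c\<close> of each formula builder supplies fresh variables: the bound
  node variables are \<open>c\<close> and \<open>Suc c\<close>, so the free ones must be smaller than \<open>c\<close>.\<close>

definition FRoot :: "nat \<Rightarrow> nat \<Rightarrow> form" where
  "FRoot a c = FAllN c (FLe a c)"

definition FNextLevel :: "nat \<Rightarrow> nat \<Rightarrow> nat \<Rightarrow> form" where
  "FNextLevel a y c = FExN c (FAnd (FEqLevel c a) (FOr (FS0 c y) (FS1 c y)))"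

definition FLevelLess :: "nat \<Rightarrow> nat \<Rightarrow> nat \<Rightarrow> form" where
  "FLevelLess a b c = FExN c (FAnd (FLe c b) (FAnd (FEqLevel c a) (FNeg (FEq c b))))"

lemma sat_FRoot: "a < c \<Longrightarrow> sat \<nu> \<sigma> (FRoot a c) \<longleftrightarrow> length (\<nu> a) = 0"
  by (simp add: FRoot_def tree_le_def) (metis Nil_prefix prefix_Nil)

lemma sat_FNextLevel:
  "a < c \<Longrightarrow> y < c \<Longrightarrow> sat \<nu> \<sigma> (FNextLevel a y c) \<longleftrightarrow> length (\<nu> y) = Suc (length (\<nu> a))"
  by (auto simp: FNextLevel_def S0_def S1_def eq_level_def length_eq_Suc_iff_child)

lemma sat_FLevelLess:
  assumes "a < c" "b < c"
  shows "sat \<nu> \<sigma> (FLevelLess a b c) \<longleftrightarrow> length (\<nu> a) < length (\<nu> b)"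
proof -
  have "sat \<nu> \<sigma> (FLevelLess a b c) \<longleftrightarrow> (\<exists>p. strict_prefix p (\<nu> b) \<and> length p = length (\<nu> a))"
    using assms by (auto simp: FLevelLess_def tree_le_def eq_level_def strict_prefix_def)
  also have "\<dots> \<longleftrightarrow> length (\<nu> a) < length (\<nu> b)"
  proof
    assume "length (\<nu> a) < length (\<nu> b)"
    then show "\<exists>p. strict_prefix p (\<nu> b) \<and> length p = length (\<nu> a)"
      by (intro exI[of _ "take (length (\<nu> a)) (\<nu> b)"]) (auto simp: strict_prefix_def take_is_prefix)
  qed (auto dest: prefix_length_less)
  finally show ?thesis .
qed

definition ones :: "node \<Rightarrow> nat set" where
  "ones w = {i. i < length w \<and> w ! i}"

definition FBit :: "nat \<Rightarrow> nat \<Rightarrow> nat \<Rightarrow> form" where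
  "FBit u k c = FExN c (FExN (Suc c) (FAnd (FLe (Suc c) u) (FAnd (FS1 c (Suc c)) (FEqLevel c k))))"

definition FOnesWithin :: "nat \<Rightarrow> nat \<Rightarrow> nat \<Rightarrow> nat \<Rightarrow> form" where
  "FOnesWithin u a b c = FAllN c (FAllN (Suc c)
     (FImp (FAnd (FLe (Suc c) u) (FS1 c (Suc c))) (FOr (FEqLevel c a) (FEqLevel c b))))"

definition FOnes :: "nat \<Rightarrow> nat \<Rightarrow> nat \<Rightarrow> nat \<Rightarrow> form" where
  "FOnes u a b c = FAnd (FBit u a c) (FAnd (FBit u b c) (FOnesWithin u a b c))"

lemma ex_prefix_True_iff: "(\<exists>p. length p = k \<and> prefix (p @ [True]) w) \<longleftrightarrow> k \<in> ones w"
proof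
  assume "\<exists>p. length p = k \<and> prefix (p @ [True]) w"
  then obtain p r where "length p = k" "w = p @ [True] @ r" by (auto simp: prefix_def)
  then show "k \<in> ones w" by (auto simp: ones_def nth_append)
next
  assume k: "k \<in> ones w"
  then have "prefix (take k w @ [True]) w"
    by (metis (mono_tags) mem_Collect_eq ones_def take_Suc_conv_app_nth take_is_prefix)
  then show "\<exists>p. length p = k \<and> prefix (p @ [True]) w"
    using k by (intro exI[of _ "take k w"]) (auto simp: ones_def)
qed

lemma sat_FBit: "u < c \<Longrightarrow> k < c \<Longrightarrow> sat \<nu> \<sigma> (FBit u k c) \<longleftrightarrow> length (\<nu> k) \<in> ones (\<nu> u)"
  by (auto simp: FBit_def tree_le_def eq_level_def S1_def simp flip: ex_prefix_True_iff)

lemma sat_FOnesWithin: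
  assumes "u < c" "a < c" "b < c"
  shows "sat \<nu> \<sigma> (FOnesWithin u a b c) \<longleftrightarrow> ones (\<nu> u) \<subseteq> {length (\<nu> a), length (\<nu> b)}"
proof -
  have "sat \<nu> \<sigma> (FOnesWithin u a b c) \<longleftrightarrow>
    (\<forall>k. (\<exists>p. length p = k \<and> prefix (p @ [True]) (\<nu> u)) \<longrightarrow> k = length (\<nu> a) \<or> k = length (\<nu> b))"
    using assms by (auto simp: FOnesWithin_def tree_le_def eq_level_def S1_def)
  then show ?thesis by (auto simp: ex_prefix_True_iff)
qed

lemma sat_FOnes:
  "u < c \<Longrightarrow> a < c \<Longrightarrow> b < c \<Longrightarrow>
   sat \<nu> \<sigma> (FOnes u a b c) \<longleftrightarrow> ones (\<nu> u) = {length (\<nu> a), length (\<nu> b)}"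
  by (auto simp: FOnes_def sat_FBit sat_FOnesWithin)

text \<open>A pair \<open>(i, v)\<close> is stored by a node with 1-bits exactly at \<open>i\<close> and \<open>v\<close>.  Such a
  node does not tell which of the two is the argument, so the pairs
  of a graph with \<open>i \<le> v\<close> are kept in one set \<open>X\<close> and those with \<open>v < i\<close> in another
  set \<open>Y\<close>.  Both sets lie on a single level and are bound by the level quantifier.\<close>

definition graph_rel :: "node set \<Rightarrow> node set \<Rightarrow> nat \<Rightarrow> nat \<Rightarrow> bool" where
  "graph_rel X Y i v \<longleftrightarrow> (\<exists>u. (i \<le> v \<and> u \<in> X \<or> v < i \<and> u \<in> Y) \<and> ones u = {i, v})"

definition FGraph :: "nat \<Rightarrow> nat \<Rightarrow> nat \<Rightarrow> form" where
  "FGraph a b c = FExN c (FAnd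
     (FOr (FAnd (FNeg (FLevelLess b a (Suc c))) (FMem c 0)) (FAnd (FLevelLess b a (Suc c)) (FMem c 1)))
     (FOnes c a b (Suc c)))"

lemma sat_FGraph:
  "a < c \<Longrightarrow> b < c \<Longrightarrow>
   sat \<nu> \<sigma> (FGraph a b c) \<longleftrightarrow> graph_rel (\<sigma> 0) (\<sigma> 1) (length (\<nu> a)) (length (\<nu> b))"
  by (simp add: FGraph_def sat_FLevelLess sat_FOnes graph_rel_def) (metis not_le)

section \<open>Primitive recursion through level sets\<close>

definition prim_course ::
  "nat \<Rightarrow> nat \<Rightarrow> (nat \<Rightarrow> bool) \<Rightarrow> (nat \<Rightarrow> nat \<Rightarrow> nat \<Rightarrow> bool) \<Rightarrow> (nat \<Rightarrow> nat \<Rightarrow> bool) \<Rightarrow> bool" where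
  "prim_course N y Pf Pg R \<longleftrightarrow> (\<forall>i\<le>N. \<exists>v. R i v) \<and> (\<forall>v. R 0 v \<longrightarrow> Pf v)
     \<and> (\<forall>i v w. i < N \<and> R i v \<and> R (Suc i) w \<longrightarrow> Pg v i w) \<and> (\<forall>v. R N v \<longrightarrow> v = y)"

lemma reval_RPrim_sequence:
  "reval (RPrim f g) (n # xs) y \<Longrightarrow>
   \<exists>s. s n = y \<and> reval f xs (s 0) \<and> (\<forall>i<n. reval g (s i # i # xs) (s (Suc i)))"
proof (induction n arbitrary: y)
  case 0
  then show ?case by (auto elim: reval_RPrimE intro!: exI[of _ "\<lambda>_. y"])
next
  case (Suc n)
  from Suc.prems obtain y' where y': "reval (RPrim f g) (n # xs) y'" "reval g (y' # n # xs) y"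
    by (rule reval_RPrimE) auto
  from Suc.IH[OF y'(1)] obtain s
    where s: "s n = y'" "reval f xs (s 0)" "\<forall>i<n. reval g (s i # i # xs) (s (Suc i))"
    by blast
  show ?case
  proof (intro exI[of _ "s(Suc n := y)"] conjI allI impI)
    fix i assume "i < Suc n"
    then show "reval g ((s(Suc n := y)) i # i # xs) ((s(Suc n := y)) (Suc i))"
      using s y'(2) by (cases "i = n") auto
  qed (use s in auto)
qed

lemma reval_RPrim_if_course:
  assumes "prim_course N y (reval f xs) (\<lambda>v i w. reval g (v # i # xs) w) R"
  shows "reval (RPrim f g) (N # xs) y"
proof -
  note course = assms[unfolded prim_course_def]
  have "reval (RPrim f g) (i # xs) v" if "i \<le> N" "R i v" for i v
    using that
  proof (induction i arbitrary: v)
    case 0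
    then show ?case using course reval.prim0 by blast
  next
    case (Suc i)
    obtain v' where v': "R i v'" using course Suc.prems(1) by (meson Suc_leD)
    then have "reval (RPrim f g) (i # xs) v'" using Suc by simp
    moreover have "reval g (v' # i # xs) v" using course v' Suc.prems by auto
    ultimately show ?case by (rule reval.primS)
  qed
  moreover obtain v where "R N v" using course by blast
  ultimately show ?thesis using course by auto
qed

definition pair_word :: "nat \<Rightarrow> nat \<Rightarrow> nat \<Rightarrow> node" where
  "pair_word M i v = map (\<lambda>k. k = i \<or> k = v) [0..<M]"

lemma length_pair_word [simp]: "length (pair_word M i v) = M"
  by (simp add: pair_word_def)

lemma ones_pair_word: "i < M \<Longrightarrow> v < M \<Longrightarrow> ones (pair_word M i v) = {i, v}"
  by (auto simp: ones_def pair_word_def)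

lemma graph_rel_of_sequence:
  fixes s :: "nat \<Rightarrow> nat"
  obtains L X Y where "X \<subseteq> {w. length w = L}" "Y \<subseteq> {w. length w = L}"
    and "\<And>i v. graph_rel X Y i v \<longleftrightarrow> i \<le> N \<and> v = s i"
proof -
  define L where "L = Suc (max N (Max (s ` {..N})))"
  have bounded: "i < L \<and> s i < L" if "i \<le> N" for i
  proof -
    have "s i \<le> Max (s ` {..N})" using that by (intro Max_ge) auto
    then show ?thesis using that unfolding L_def by linarith
  qed
  define X where "X = (\<lambda>i. pair_word L i (s i)) ` {i. i \<le> N \<and> i \<le> s i}"
  define Y where "Y = (\<lambda>i. pair_word L i (s i)) ` {i. i \<le> N \<and> s i < i}"
  have "graph_rel X Y i v \<longleftrightarrow> i \<le> N \<and> v = s i" for i v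
  proof
    assume "graph_rel X Y i v"
    then obtain i' where "i' \<le> N" "{i', s i'} = {i, v}" "i \<le> v \<longleftrightarrow> i' \<le> s i'"
      unfolding graph_rel_def X_def Y_def using bounded ones_pair_word by fastforce
    then show "i \<le> N \<and> v = s i"
      by (metis doubleton_eq_iff le_antisym nle_le)
  next
    assume "i \<le> N \<and> v = s i"
    then show "graph_rel X Y i v"
      unfolding graph_rel_def X_def Y_def using bounded ones_pair_word
      by (cases "i \<le> s i") (auto intro!: exI[of _ "pair_word L i (s i)"])
  qed
  moreover have "X \<subseteq> {w. length w = L}" "Y \<subseteq> {w. length w = L}"
    unfolding X_def Y_def by auto
  ultimately show ?thesis using that by blast
qed

lemma reval_RPrim_iff_course:
  "reval (RPrim f g) (N # xs) y \<longleftrightarrow>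
   (\<exists>L X Y. X \<subseteq> {w. length w = L} \<and> Y \<subseteq> {w. length w = L} \<and>
     prim_course N y (reval f xs) (\<lambda>v i w. reval g (v # i # xs) w) (graph_rel X Y))"
proof
  assume "reval (RPrim f g) (N # xs) y"
  then obtain s where s: "s N = y" "reval f xs (s 0)" "\<forall>i<N. reval g (s i # i # xs) (s (Suc i))"
    using reval_RPrim_sequence by blast
  obtain L X Y where "X \<subseteq> {w. length w = L}" "Y \<subseteq> {w. length w = L}"
    and graph: "\<And>i v. graph_rel X Y i v \<longleftrightarrow> i \<le> N \<and> v = s i"
    using graph_rel_of_sequence[of N s] by metis
  moreover have "prim_course N y (reval f xs) (\<lambda>v i w. reval g (v # i # xs) w) (graph_rel X Y)"
    unfolding prim_course_def graph using s by auto
  ultimately show "\<exists>L X Y. X \<subseteq> {w. length w = L} \<and> Y \<subseteq> {w. length w = L} \<and>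
     prim_course N y (reval f xs) (\<lambda>v i w. reval g (v # i # xs) w) (graph_rel X Y)"
    by blast
qed (blast intro: reval_RPrim_if_course)

text \<open>Variable roles: \<open>b + 1\<close> and \<open>b + 2\<close> hold consecutive arguments \<open>i\<close> and \<open>Suc i\<close>,
  \<open>b + 3\<close> and \<open>b + 4\<close> the corresponding values, and \<open>b + 5\<close> is the fresh variable supply;
  \<open>Ff\<close> constrains the value in \<open>b + 3\<close>, and \<open>Fg\<close> relates \<open>b + 3\<close>, \<open>b + 1\<close>, \<open>b + 4\<close>.
  In \<open>FPrimRec\<close> the set variables 0 and 1 are the two halves of the graph, on the level
  of \<open>b\<close>.\<close>

definition FCourseTotal :: "nat \<Rightarrow> nat \<Rightarrow> form" where
  "FCourseTotal n b = FAllN (b+1) (FImp (FNeg (FLevelLess n (b+1) (b+5)))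
     (FExN (b+3) (FGraph (b+1) (b+3) (b+5))))"

definition FCourseInit :: "nat \<Rightarrow> form \<Rightarrow> form" where
  "FCourseInit b Ff = FAllN (b+1) (FAllN (b+3) (FImp (FAnd (FRoot (b+1) (b+5))
     (FGraph (b+1) (b+3) (b+5))) Ff))"

definition FCourseStep :: "nat \<Rightarrow> nat \<Rightarrow> form \<Rightarrow> form" where
  "FCourseStep n b Fg = FAllN (b+1) (FAllN (b+2) (FAllN (b+3) (FAllN (b+4) (FImp
     (FAnd (FLevelLess (b+1) n (b+5)) (FAnd (FNextLevel (b+1) (b+2) (b+5))
       (FAnd (FGraph (b+1) (b+3) (b+5)) (FGraph (b+2) (b+4) (b+5))))) Fg))))"

definition FCourseFinal :: "nat \<Rightarrow> nat \<Rightarrow> nat \<Rightarrow> form" where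
  "FCourseFinal n y b = FAllN (b+1) (FAllN (b+3) (FImp (FAnd (FEqLevel (b+1) n)
     (FGraph (b+1) (b+3) (b+5))) (FEqLevel (b+3) y)))"

definition FPrimRec :: "nat \<Rightarrow> nat \<Rightarrow> nat \<Rightarrow> form \<Rightarrow> form \<Rightarrow> form" where
  "FPrimRec n y b Ff Fg = FExN b (FExLevel 0 b (FExLevel 1 b
     (FAnd (FCourseTotal n b) (FAnd (FCourseInit b Ff) (FAnd (FCourseStep n b Fg) (FCourseFinal n y b))))))"

lemma sat_FCourseTotal:
  assumes "n < b"
  shows "sat \<nu> \<sigma> (FCourseTotal n b) \<longleftrightarrow> (\<forall>i\<le>length (\<nu> n). \<exists>v. graph_rel (\<sigma> 0) (\<sigma> 1) i v)"
  using assms by (simp add: FCourseTotal_def sat_FLevelLess sat_FGraph not_less) (metis ex_node_of_length)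

lemma sat_FCourseInit:
  assumes Ff: "\<And>\<nu>'. \<forall>x<b. \<nu>' x = \<nu> x \<Longrightarrow> sat \<nu>' \<sigma> Ff \<longleftrightarrow> Pf (length (\<nu>' (b+3)))"
  shows "sat \<nu> \<sigma> (FCourseInit b Ff) \<longleftrightarrow> (\<forall>v. graph_rel (\<sigma> 0) (\<sigma> 1) 0 v \<longrightarrow> Pf v)"
  by (simp add: FCourseInit_def sat_FRoot sat_FGraph Ff) (metis ex_node_of_length)

lemma sat_FCourseStep:
  assumes "n < b"
    and Fg: "\<And>\<nu>'. \<forall>x<b. \<nu>' x = \<nu> x \<Longrightarrow>
      sat \<nu>' \<sigma> Fg \<longleftrightarrow> Pg (length (\<nu>' (b+3))) (length (\<nu>' (b+1))) (length (\<nu>' (b+4)))"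
  shows "sat \<nu> \<sigma> (FCourseStep n b Fg) \<longleftrightarrow>
    (\<forall>i v w. i < length (\<nu> n) \<and> graph_rel (\<sigma> 0) (\<sigma> 1) i v \<and> graph_rel (\<sigma> 0) (\<sigma> 1) (Suc i) w
       \<longrightarrow> Pg v i w)"
  using assms(1)
  by (simp add: FCourseStep_def sat_FLevelLess sat_FNextLevel sat_FGraph Fg) (metis ex_node_of_length)

lemma sat_FCourseFinal:
  assumes "n < b" "y < b"
  shows "sat \<nu> \<sigma> (FCourseFinal n y b) \<longleftrightarrow> (\<forall>v. graph_rel (\<sigma> 0) (\<sigma> 1) (length (\<nu> n)) v \<longrightarrow> v = length (\<nu> y))"
  using assms by (simp add: FCourseFinal_def sat_FGraph eq_level_def) (metis ex_node_of_length)

lemma sat_FPrimRec: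
  assumes "n < b" "y < b"
    and Ff: "\<And>\<nu>' \<sigma>'. \<forall>x<b. \<nu>' x = \<nu> x \<Longrightarrow> sat \<nu>' \<sigma>' Ff \<longleftrightarrow> Pf (length (\<nu>' (b+3)))"
    and Fg: "\<And>\<nu>' \<sigma>'. \<forall>x<b. \<nu>' x = \<nu> x \<Longrightarrow>
      sat \<nu>' \<sigma>' Fg \<longleftrightarrow> Pg (length (\<nu>' (b+3))) (length (\<nu>' (b+1))) (length (\<nu>' (b+4)))"
  shows "sat \<nu> \<sigma> (FPrimRec n y b Ff Fg) \<longleftrightarrow>
    (\<exists>L X Y. X \<subseteq> {w. length w = L} \<and> Y \<subseteq> {w. length w = L} \<and>
       prim_course (length (\<nu> n)) (length (\<nu> y)) Pf Pg (graph_rel X Y))"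
proof -
  have "sat (\<nu>(b := u)) (\<sigma>(0 := X, 1 := Y))
      (FAnd (FCourseTotal n b) (FAnd (FCourseInit b Ff) (FAnd (FCourseStep n b Fg) (FCourseFinal n y b))))
    \<longleftrightarrow> prim_course (length (\<nu> n)) (length (\<nu> y)) Pf Pg (graph_rel X Y)" for u X Y
    using assms
    by (simp add: prim_course_def sat_FCourseTotal sat_FCourseInit sat_FCourseStep sat_FCourseFinal)
      blast
  then show ?thesis
    by (simp add: FPrimRec_def level_def) (metis ex_node_of_length)
qed

section \<open>Definability of recursive functions\<close>

abbreviation levels :: "(nat \<Rightarrow> node) \<Rightarrow> nat list \<Rightarrow> nat list" where
  "levels \<nu> vs \<equiv> map (\<lambda>v. length (\<nu> v)) vs"

text \<open>In \<open>rep f vs y b\<close> the bound variables are those from \<open>b\<close> on.  For a composition,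
  \<open>rep_comp\<close> binds the values of the inner functions to \<open>j, j + 1, \<dots>\<close> and then
  asserts \<open>t\<close>.\<close>

fun rep :: "recf \<Rightarrow> nat list \<Rightarrow> nat \<Rightarrow> nat \<Rightarrow> form"
and rep_comp :: "recf list \<Rightarrow> nat list \<Rightarrow> nat \<Rightarrow> nat \<Rightarrow> form \<Rightarrow> form" where
  "rep RZ vs y b = FRoot y b"
| "rep RS vs y b = (case vs of [] \<Rightarrow> FFalse | v # _ \<Rightarrow> FNextLevel v y b)"
| "rep (RProj i) vs y b = (if i < length vs then FEqLevel (vs ! i) y else FFalse)"
| "rep (RComp f gs) vs y b =
     rep_comp gs vs b (b + length gs) (rep f [b..<b + length gs] y (b + length gs))"
| "rep (RPrim f g) vs y b = (case vs of [] \<Rightarrow> FFalse | n # ws \<Rightarrow>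
     FPrimRec n y b (rep f ws (b+3) (b+5)) (rep g ((b+3) # (b+1) # ws) (b+4) (b+5)))"
| "rep (RMn f) vs y b = FAnd
     (FExN b (FAnd (FRoot b (Suc b)) (rep f (y # vs) b (Suc b))))
     (FAllN b (FImp (FLevelLess b y (Suc b))
        (FExN (Suc b) (FAnd (FNeg (FRoot (Suc b) (b+2))) (rep f (b # vs) (Suc b) (b+2))))))"
| "rep_comp [] vs j b t = t"
| "rep_comp (g # gs) vs j b t = FExN j (FAnd (rep g vs j b) (rep_comp gs vs (Suc j) b t))"

definition rep_defines :: "recf \<Rightarrow> bool" where
  "rep_defines f \<longleftrightarrow> (\<forall>vs y b \<nu> \<sigma>. (\<forall>v\<in>set vs. v < b) \<longrightarrow> y < b \<longrightarrow>
     (sat \<nu> \<sigma> (rep f vs y b) \<longleftrightarrow> reval f (levels \<nu> vs) (length (\<nu> y))))"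

lemma rep_definesD:
  "rep_defines f \<Longrightarrow> \<forall>v\<in>set vs. v < b \<Longrightarrow> y < b \<Longrightarrow>
   sat \<nu> \<sigma> (rep f vs y b) \<longleftrightarrow> reval f (levels \<nu> vs) (length (\<nu> y))"
  unfolding rep_defines_def by blast

lemma levels_cong: "\<forall>x<b. \<nu>' x = \<nu> x \<Longrightarrow> \<forall>v\<in>set vs. v < b \<Longrightarrow> levels \<nu>' vs = levels \<nu> vs"
  by auto

lemma rep_defines_RZ: "rep_defines RZ"
  by (auto simp: rep_defines_def sat_FRoot elim: reval_RZE intro: reval.zero)

lemma rep_defines_RS: "rep_defines RS"
  unfolding rep_defines_def
  by (auto simp: sat_FNextLevel elim: reval_RSE intro: reval.succ split: list.split)

lemma rep_defines_RProj: "rep_defines (RProj i)"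
  unfolding rep_defines_def
proof (intro allI impI)
  fix vs :: "nat list" and y b :: nat and \<nu> \<sigma>
  show "sat \<nu> \<sigma> (rep (RProj i) vs y b) \<longleftrightarrow> reval (RProj i) (levels \<nu> vs) (length (\<nu> y))"
    using reval.proj[of i "levels \<nu> vs"] by (auto simp: eq_level_def elim: reval_RProjE)
qed

lemma rep_defines_RPrim:
  assumes f: "rep_defines f" and g: "rep_defines g"
  shows "rep_defines (RPrim f g)"
  unfolding rep_defines_def
proof (intro allI impI)
  fix vs :: "nat list" and y b :: nat and \<nu> \<sigma>
  assume vs: "\<forall>v\<in>set vs. v < b" and y: "y < b"
  show "sat \<nu> \<sigma> (rep (RPrim f g) vs y b) \<longleftrightarrow> reval (RPrim f g) (levels \<nu> vs) (length (\<nu> y))"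
  proof (cases vs)
    case Nil
    then show ?thesis by (auto elim: reval_RPrimE)
  next
    case (Cons n ws)
    have ws: "\<forall>v\<in>set ws. v < b" and n: "n < b" using vs Cons by auto
    then have ws': "\<forall>v\<in>set ws. v < b + k" for k by auto
    have Ff: "sat \<nu>' \<sigma>' (rep f ws (b+3) (b+5)) \<longleftrightarrow> reval f (levels \<nu> ws) (length (\<nu>' (b+3)))"
      if "\<forall>x<b. \<nu>' x = \<nu> x" for \<nu>' \<sigma>'
      using rep_definesD[OF f ws'[of 5], of "b+3" \<nu>' \<sigma>'] ws levels_cong[OF that ws] by auto
    have Fg: "sat \<nu>' \<sigma>' (rep g ((b+3) # (b+1) # ws) (b+4) (b+5)) \<longleftrightarrow>
        reval g (length (\<nu>' (b+3)) # length (\<nu>' (b+1)) # levels \<nu> ws) (length (\<nu>' (b+4)))"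
      if "\<forall>x<b. \<nu>' x = \<nu> x" for \<nu>' \<sigma>'
      using rep_definesD[OF g, of "(b+3) # (b+1) # ws" "b+5" "b+4" \<nu>' \<sigma>'] ws'[of 5] ws levels_cong[OF that ws]
      by auto
    have "sat \<nu> \<sigma> (rep (RPrim f g) vs y b) \<longleftrightarrow> (\<exists>L X Y. X \<subseteq> {w. length w = L} \<and> Y \<subseteq> {w. length w = L} \<and>
      prim_course (length (\<nu> n)) (length (\<nu> y))
        (reval f (levels \<nu> ws)) (\<lambda>v i w. reval g (v # i # levels \<nu> ws) w) (graph_rel X Y))"
      unfolding Cons rep.simps list.case using n y
      by (intro sat_FPrimRec Ff Fg)
    also have "\<dots> \<longleftrightarrow> reval (RPrim f g) (levels \<nu> vs) (length (\<nu> y))"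
      unfolding Cons by (simp add: reval_RPrim_iff_course)
    finally show ?thesis .
  qed
qed

fun assign :: "(nat \<Rightarrow> node) \<Rightarrow> nat \<Rightarrow> node list \<Rightarrow> nat \<Rightarrow> node" where
  "assign \<nu> j [] = \<nu>"
| "assign \<nu> j (u # us) = assign (\<nu>(j := u)) (Suc j) us"

lemma assign_below: "x < j \<Longrightarrow> assign \<nu> j us x = \<nu> x"
  by (induction us arbitrary: \<nu> j) auto

lemma assign_nth: "k < length us \<Longrightarrow> assign \<nu> j us (j + k) = us ! k"
proof (induction us arbitrary: \<nu> j k)
  case (Cons u us)
  show ?case
  proof (cases k)
    case (Suc k')
    then have "assign (\<nu>(j := u)) (Suc j) us (Suc j + k') = us ! k'"
      using Cons by (intro Cons.IH) simp
    then show ?thesis using Suc by simp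
  qed (simp add: assign_below)
qed simp

lemma map_assign: "map (assign \<nu> j us) [j..<j + length us] = us"
  by (rule nth_equalityI) (auto simp: assign_nth)

lemma sat_rep_comp:
  assumes "\<forall>g\<in>set gs. rep_defines g" and "\<forall>v\<in>set vs. v < j" and "j + length gs \<le> b"
  shows "sat \<nu> \<sigma> (rep_comp gs vs j b t) \<longleftrightarrow>
    (\<exists>us. list_all2 (\<lambda>g u. reval g (levels \<nu> vs) (length u)) gs us \<and> sat (assign \<nu> j us) \<sigma> t)"
  using assms
proof (induction gs arbitrary: j \<nu>)
  case (Cons g gs)
  have g: "rep_defines g" and gs: "\<forall>g\<in>set gs. rep_defines g" using Cons.prems(1) by auto
  have vs_b: "\<forall>v\<in>set vs. v < b" and vs_Suc: "\<forall>v\<in>set vs. v < Suc j"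
    and "j < b" "Suc j + length gs \<le> b"
    using Cons.prems(2,3) by auto
  have levels_upd: "levels (\<nu>(j := u)) vs = levels \<nu> vs" for u
    using Cons.prems(2) by auto
  have "sat (\<nu>(j := u)) \<sigma> (rep g vs j b) \<longleftrightarrow> reval g (levels \<nu> vs) (length u)" for u
    using rep_definesD[OF g vs_b \<open>j < b\<close>, of "\<nu>(j := u)" \<sigma>] unfolding levels_upd fun_upd_same .
  moreover have "sat (\<nu>(j := u)) \<sigma> (rep_comp gs vs (Suc j) b t) \<longleftrightarrow>
      (\<exists>us. list_all2 (\<lambda>g u. reval g (levels \<nu> vs) (length u)) gs us \<and>
         sat (assign (\<nu>(j := u)) (Suc j) us) \<sigma> t)" for u
    using Cons.IH[OF gs vs_Suc \<open>Suc j + length gs \<le> b\<close>, of "\<nu>(j := u)"] unfolding levels_upd .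
  ultimately show ?case
    by (simp add: list_all2_Cons1) (metis assign.simps(2))
qed simp

lemma reval_RComp_iff:
  "reval (RComp f gs) xs z \<longleftrightarrow> (\<exists>ys. list_all2 (\<lambda>g y. reval g xs y) gs ys \<and> reval f ys z)"
  by (auto elim: reval_RCompE intro: reval.comp)

lemma ex_node_list_of_lengths: "\<exists>us::node list. map length us = ys"
  by (rule exI[of _ "map (\<lambda>n. replicate n False) ys"]) (simp add: comp_def)

lemma rep_defines_RComp:
  assumes f: "rep_defines f" and gs: "\<forall>g\<in>set gs. rep_defines g"
  shows "rep_defines (RComp f gs)"
  unfolding rep_defines_def
proof (intro allI impI)
  fix vs :: "nat list" and y b :: nat and \<nu> \<sigma>
  assume vs: "\<forall>v\<in>set vs. v < b" and y: "y < b"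
  let ?k = "length gs"
  have inner: "sat (assign \<nu> b us) \<sigma> (rep f [b..<b + ?k] y (b + ?k)) \<longleftrightarrow>
      reval f (map length us) (length (\<nu> y))"
    if "?k = length us" for us
  proof -
    have "map length (map (assign \<nu> b us) [b..<b + ?k]) = map length us"
      using map_assign[of \<nu> b us] unfolding that by (rule arg_cong)
    then have args: "levels (assign \<nu> b us) [b..<b + ?k] = map length us"
      by (simp add: comp_def)
    have "\<forall>v\<in>set [b..<b + ?k]. v < b + ?k" "y < b + ?k" using y by auto
    from rep_definesD[OF f this, of "assign \<nu> b us" \<sigma>]
    show ?thesis unfolding args assign_below[OF y] .
  qed
  have "sat \<nu> \<sigma> (rep (RComp f gs) vs y b) \<longleftrightarrow>
    (\<exists>us. list_all2 (\<lambda>g u. reval g (levels \<nu> vs) (length u)) gs us \<and>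
       sat (assign \<nu> b us) \<sigma> (rep f [b..<b + ?k] y (b + ?k)))"
    unfolding rep.simps by (rule sat_rep_comp[OF gs vs order_refl])
  also have "\<dots> \<longleftrightarrow>
    (\<exists>us :: node list. list_all2 (\<lambda>g u. reval g (levels \<nu> vs) (length u)) gs us \<and> reval f (map length us) (length (\<nu> y)))"
    by (rule ex_cong) (rule inner[OF list_all2_lengthD])
  also have "\<dots> \<longleftrightarrow> (\<exists>ys. list_all2 (\<lambda>g y. reval g (levels \<nu> vs) y) gs ys \<and> reval f ys (length (\<nu> y)))"
  proof
    assume "\<exists>us :: node list. list_all2 (\<lambda>g u. reval g (levels \<nu> vs) (length u)) gs us \<and>
      reval f (map length us) (length (\<nu> y))"
    then obtain us :: "node list" where "list_all2 (\<lambda>g u. reval g (levels \<nu> vs) (length u)) gs us"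
      "reval f (map length us) (length (\<nu> y))" by blast
    then show "\<exists>ys. list_all2 (\<lambda>g y. reval g (levels \<nu> vs) y) gs ys \<and> reval f ys (length (\<nu> y))"
      by (intro exI[of _ "map length us"]) (simp add: list_all2_map2)
  next
    assume "\<exists>ys. list_all2 (\<lambda>g y. reval g (levels \<nu> vs) y) gs ys \<and> reval f ys (length (\<nu> y))"
    then obtain ys where ys: "list_all2 (\<lambda>g y. reval g (levels \<nu> vs) y) gs ys" "reval f ys (length (\<nu> y))"
      by blast
    obtain us :: "node list" where us: "map length us = ys"
      using ex_node_list_of_lengths by blast
    show "\<exists>us :: node list. list_all2 (\<lambda>g u. reval g (levels \<nu> vs) (length u)) gs us \<and>
      reval f (map length us) (length (\<nu> y))"
      using ys unfolding us[symmetric] by (intro exI[of _ us]) (simp add: list_all2_map2)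
  qed
  also have "\<dots> \<longleftrightarrow> reval (RComp f gs) (levels \<nu> vs) (length (\<nu> y))"
    by (rule reval_RComp_iff[symmetric])
  finally show "sat \<nu> \<sigma> (rep (RComp f gs) vs y b) \<longleftrightarrow> reval (RComp f gs) (levels \<nu> vs) (length (\<nu> y))" .
qed

lemma rep_defines_RMn:
  assumes f: "rep_defines f"
  shows "rep_defines (RMn f)"
  unfolding rep_defines_def
proof (intro allI impI)
  fix vs :: "nat list" and y b :: nat and \<nu> \<sigma>
  assume vs: "\<forall>v\<in>set vs. v < b" and y: "y < b"
  let ?xs = "levels \<nu> vs"
  have root: "sat (\<nu>(b := u)) \<sigma> (FAnd (FRoot b (Suc b)) (rep f (y # vs) b (Suc b))) \<longleftrightarrow>
      length u = 0 \<and> reval f (length (\<nu> y) # ?xs) 0" for u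
  proof -
    have args: "levels (\<nu>(b := u)) (y # vs) = length (\<nu> y) # ?xs" using vs y by auto
    have "\<forall>v\<in>set (y # vs). v < Suc b" using vs y by auto
    then have "sat (\<nu>(b := u)) \<sigma> (rep f (y # vs) b (Suc b)) \<longleftrightarrow> reval f (length (\<nu> y) # ?xs) (length u)"
      using rep_definesD[OF f, of "y # vs" "Suc b" b "\<nu>(b := u)" \<sigma>] unfolding args fun_upd_same
      by blast
    then show ?thesis by (auto simp: sat_FRoot)
  qed
  have nonzero: "sat (\<nu>(b := u, Suc b := u')) \<sigma>
        (FAnd (FNeg (FRoot (Suc b) (b+2))) (rep f (b # vs) (Suc b) (b+2))) \<longleftrightarrow>
      length u' \<noteq> 0 \<and> reval f (length u # ?xs) (length u')" for u u'
  proof -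
    have args: "levels (\<nu>(b := u, Suc b := u')) (b # vs) = length u # ?xs" using vs by auto
    have "\<forall>v\<in>set (b # vs). v < b + 2" "Suc b < b + 2" using vs by auto
    then have "sat (\<nu>(b := u, Suc b := u')) \<sigma> (rep f (b # vs) (Suc b) (b+2)) \<longleftrightarrow>
        reval f (length u # ?xs) (length u')"
      using rep_definesD[OF f, of "b # vs" "b+2" "Suc b" "\<nu>(b := u, Suc b := u')" \<sigma>]
      unfolding args fun_upd_same by blast
    then show ?thesis by (auto simp: sat_FRoot)
  qed
  have less: "sat (\<nu>(b := u)) \<sigma> (FLevelLess b y (Suc b)) \<longleftrightarrow> length u < length (\<nu> y)" for u
    using y by (simp add: sat_FLevelLess)
  have "sat \<nu> \<sigma> (rep (RMn f) vs y b) \<longleftrightarrow>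
    (\<exists>u. sat (\<nu>(b := u)) \<sigma> (FAnd (FRoot b (Suc b)) (rep f (y # vs) b (Suc b)))) \<and>
    (\<forall>u. sat (\<nu>(b := u)) \<sigma> (FLevelLess b y (Suc b)) \<longrightarrow> (\<exists>u'. sat (\<nu>(b := u, Suc b := u')) \<sigma>
       (FAnd (FNeg (FRoot (Suc b) (b+2))) (rep f (b # vs) (Suc b) (b+2)))))"
    by simp
  also have "\<dots> \<longleftrightarrow> reval f (length (\<nu> y) # ?xs) 0 \<and> (\<forall>m<length (\<nu> y). \<exists>k. k \<noteq> 0 \<and> reval f (m # ?xs) k)"
  proof -
    have zero_iff: "(\<exists>u::node. length u = 0 \<and> P) \<longleftrightarrow> P" for P
      using ex_node_of_length by blast
    have search_iff: "(\<forall>u::node. length u < length (\<nu> y) \<longrightarrow>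
        (\<exists>u'::node. length u' \<noteq> 0 \<and> reval f (length u # ?xs) (length u'))) \<longleftrightarrow>
      (\<forall>m<length (\<nu> y). \<exists>k. k \<noteq> 0 \<and> reval f (m # ?xs) k)"
    proof (intro iffI allI impI)
      fix m assume "\<forall>u::node. length u < length (\<nu> y) \<longrightarrow>
        (\<exists>u'::node. length u' \<noteq> 0 \<and> reval f (length u # ?xs) (length u'))" "m < length (\<nu> y)"
      moreover obtain u :: node where "length u = m" using ex_node_of_length by blast
      ultimately show "\<exists>k. k \<noteq> 0 \<and> reval f (m # ?xs) k" by blast
    next
      fix u :: node
      assume "\<forall>m<length (\<nu> y). \<exists>k. k \<noteq> 0 \<and> reval f (m # ?xs) k" "length u < length (\<nu> y)"
      then obtain k where "k \<noteq> 0" "reval f (length u # ?xs) k" by blast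
      moreover obtain u' :: node where "length u' = k" using ex_node_of_length by blast
      ultimately show "\<exists>u'::node. length u' \<noteq> 0 \<and> reval f (length u # ?xs) (length u')" by blast
    qed
    show ?thesis by (simp only: root nonzero less zero_iff search_iff)
  qed
  also have "\<dots> \<longleftrightarrow> reval (RMn f) ?xs (length (\<nu> y))"
    by (auto elim: reval_RMnE intro: reval.mn)
  finally show "sat \<nu> \<sigma> (rep (RMn f) vs y b) \<longleftrightarrow> reval (RMn f) ?xs (length (\<nu> y))" .
qed

lemma rep_defines: "rep_defines f"
  by (induction f)
    (auto intro: rep_defines_RZ rep_defines_RS rep_defines_RProj rep_defines_RComp
      rep_defines_RPrim rep_defines_RMn)

lemma fvN_FRoot: "fvN (FRoot a c) \<subseteq> {a}"
  by (auto simp: FRoot_def)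

lemma fvN_FNextLevel: "fvN (FNextLevel a y c) \<subseteq> {a, y}"
  by (auto simp: FNextLevel_def)

lemma fvN_FLevelLess: "fvN (FLevelLess a b c) \<subseteq> {a, b}"
  by (auto simp: FLevelLess_def)

lemma fvN_FOnes: "fvN (FOnes u a b c) \<subseteq> {u, a, b}"
  by (auto simp: FOnes_def FBit_def FOnesWithin_def)

lemma fvN_FGraph: "fvN (FGraph a b c) \<subseteq> {a, b}"
  using fvN_FLevelLess[of b a "Suc c"] fvN_FOnes[of c a b "Suc c"] by (auto simp: FGraph_def)

lemma fvS_FRoot: "fvS (FRoot a c) = {}"
  by (simp add: FRoot_def)

lemma fvS_FNextLevel: "fvS (FNextLevel a y c) = {}"
  by (simp add: FNextLevel_def)

lemma fvS_FLevelLess: "fvS (FLevelLess a b c) = {}"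
  by (simp add: FLevelLess_def)

lemma fvS_FGraph: "fvS (FGraph a b c) \<subseteq> {0, 1}"
  by (auto simp: FGraph_def FOnes_def FBit_def FOnesWithin_def fvS_FLevelLess)

lemma fvN_FPrimRec:
  assumes "fvN Ff \<subseteq> insert (b+3) W" and "fvN Fg \<subseteq> {b+1, b+3, b+4} \<union> W"
  shows "fvN (FPrimRec n y b Ff Fg) \<subseteq> {n, y} \<union> W"
  using assms fvN_FLevelLess[of n "b+1" "b+5"] fvN_FLevelLess[of "b+1" n "b+5"]
    fvN_FGraph[of "b+1" "b+3" "b+5"] fvN_FGraph[of "b+2" "b+4" "b+5"] fvN_FRoot[of "b+1" "b+5"]
    fvN_FNextLevel[of "b+1" "b+2" "b+5"]
  unfolding FPrimRec_def FCourseTotal_def FCourseInit_def FCourseStep_def FCourseFinal_def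
  by (simp; blast)

lemma fvS_FPrimRec:
  assumes "fvS Ff = {}" and "fvS Fg = {}"
  shows "fvS (FPrimRec n y b Ff Fg) = {}"
  using assms fvS_FGraph[of "b+1" "b+3" "b+5"] fvS_FGraph[of "b+2" "b+4" "b+5"]
  unfolding FPrimRec_def FCourseTotal_def FCourseInit_def FCourseStep_def FCourseFinal_def
  by (auto simp: fvS_FLevelLess fvS_FRoot fvS_FNextLevel)

lemma fv_rep:
  "fvN (rep f vs y b) \<subseteq> insert y (set vs) \<and> fvS (rep f vs y b) = {}"
  "fvN (rep_comp gs vs j b t) \<subseteq> set vs \<union> (fvN t - {j..<j + length gs}) \<and>
   fvS (rep_comp gs vs j b t) = fvS t"
proof (induction f vs y b and gs vs j b t rule: rep_rep_comp.induct)
  case (1 vs y b)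
  then show ?case using fvN_FRoot[of y b] by (auto simp: fvS_FRoot)
next
  case (2 vs y b)
  then show ?case using fvN_FNextLevel by (auto simp: fvS_FNextLevel split: list.split)
next
  case (5 f g vs y b)
  show ?case
  proof (cases vs)
    case (Cons n ws)
    have "fvN (rep (RPrim f g) vs y b) \<subseteq> {n, y} \<union> set ws"
      unfolding Cons rep.simps list.case by (rule fvN_FPrimRec) (use 5 Cons in auto)
    moreover have "fvS (rep (RPrim f g) vs y b) = {}"
      using Cons 5 by (auto intro!: fvS_FPrimRec)
    ultimately show ?thesis using Cons by auto
  qed simp
next
  case (6 f vs y b)
  then show ?case
    using fvN_FRoot[of b "Suc b"] fvN_FRoot[of "Suc b" "b+2"] fvN_FLevelLess[of b y "Suc b"]
    by (auto simp: fvS_FRoot fvS_FLevelLess)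
qed auto

lemma fv_FLevel: "fvN (FLevel n) \<subseteq> {0} \<and> fvS (FLevel n) = {}"
  by (induction n) auto

section \<open>Diagonalisation\<close>

lemma sentence_diag: "fvN \<psi> \<subseteq> {0} \<Longrightarrow> fvS \<psi> = {} \<Longrightarrow> sentence (diag \<psi>)"
  using fv_FLevel[of "code \<psi>"] by (auto simp: sentence_def diag_def)

lemma sat_diag: "sat \<nu> \<sigma> (diag \<psi>) \<longleftrightarrow> (\<exists>u. length u = code \<psi> \<and> sat (\<nu>(0 := u)) \<sigma> \<psi>)"
  by (simp add: diag_def sat_FLevel)

definition FRejectsDiag :: "recf \<Rightarrow> form" where
  "FRejectsDiag F = FExN 1 (FAnd (rep rcode_diag [0] 1 3) (FExN 2 (FAnd (FRoot 2 3) (rep F [1] 2 3))))"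

lemma sat_FRejectsDiag:
  "sat \<nu> \<sigma> (FRejectsDiag F) \<longleftrightarrow> (\<exists>d. reval rcode_diag [length (\<nu> 0)] d \<and> reval F [d] 0)"
proof -
  have "sat \<nu> \<sigma> (FRejectsDiag F) \<longleftrightarrow>
      (\<exists>u::node. reval rcode_diag [length (\<nu> 0)] (length u) \<and> reval F [length u] 0)"
    by (simp add: FRejectsDiag_def rep_definesD[OF rep_defines] sat_FRoot)
  then show ?thesis by (metis ex_node_of_length)
qed

lemma fv_FRejectsDiag: "fvN (FRejectsDiag F) \<subseteq> {0} \<and> fvS (FRejectsDiag F) = {}"
  using fv_rep(1)[of rcode_diag "[0]" 1 3] fv_rep(1)[of F "[1]" 2 3] fvN_FRoot[of 2 3]
  by (auto simp: FRejectsDiag_def fvS_FRoot)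

lemma diagonal_sentence:
  obtains \<delta> where "sentence \<delta>" and "\<And>\<nu> \<sigma>. sat \<nu> \<sigma> \<delta> \<longleftrightarrow> reval F [code \<delta>] 0"
proof
  let ?\<psi> = "FRejectsDiag F"
  show "sentence (diag ?\<psi>)"
    using fv_FRejectsDiag by (intro sentence_diag) auto
  fix \<nu> \<sigma>
  have "sat \<nu> \<sigma> (diag ?\<psi>) \<longleftrightarrow> (\<exists>d. reval rcode_diag [code ?\<psi>] d \<and> reval F [d] 0)"
    by (simp add: sat_diag sat_FRejectsDiag) (metis ex_node_of_length)
  also have "\<dots> \<longleftrightarrow> reval F [code (diag ?\<psi>)] 0"
    using reval_rcode_diag[of ?\<psi>] reval_unique[of rcode_diag "[code ?\<psi>]"] by blast
  finally show "sat \<nu> \<sigma> (diag ?\<psi>) \<longleftrightarrow> reval F [code (diag ?\<psi>)] 0" .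
qed

theorem mainTheorem3:
  shows "\<not> decidable_set (code ` chain_theory)"
proof
  assume "decidable_set (code ` chain_theory)"
  then obtain F where F: "\<And>n. reval F [n] (if n \<in> code ` chain_theory then 1 else 0)"
    unfolding decidable_set_def by blast
  obtain \<delta> where "sentence \<delta>" and \<delta>: "\<And>\<nu> \<sigma>. sat \<nu> \<sigma> \<delta> \<longleftrightarrow> reval F [code \<delta>] 0"
    using diagonal_sentence[of F] by blast
  then have "\<delta> \<in> chain_theory \<longleftrightarrow> reval F [code \<delta>] 0"
    unfolding chain_theory_def by blast
  moreover have "reval F [code \<delta>] (if \<delta> \<in> chain_theory then 1 else 0)"
    using F[of "code \<delta>"] by (simp add: inj_image_mem_iff[OF inj_code])
  ultimately show False
    using reval_unique by (cases "\<delta> \<in> chain_theory") fastforce+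
qed

end
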